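(* Let $G$ be an abelian group and $X$ a finitely supported $G$-valued random variable. Let $S\subset G$ be a set with $\mathbb{P}(X\in S)\ge\frac12$. Then for any other finitely supported $G$-valued random variable $Y$, \[\log|S|\ge \mathbb{H}(Y)-4\,\mathrm{d}[X;Y]-2\log 2.\]
   Context: $\log$ is natural. $\mathbb{H}(X)=\sum_x p_X(x)\log(1/p_X(x))$ with $p_X(x)=\mathbb{P}(X=x)$. The entropic Ruzsa distance is $\mathrm{d}[X;Y]=\mathbb{H}(X'-Y')-\tfrac12\mathbb{H}(X)-\tfrac12\mathbb{H}(Y)$, where $X',Y'$ are independent with the same distributions as $X,Y$. *)

theory Defs
  imports "HOL-Probability.Probability"
begin

text \<open>A finitely supported G-valued random variable is represented by its
distribution, a pmf with finite support. Entropy uses the natural logarithm.\<close>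

definition entropy_pmf :: "'a pmf \<Rightarrow> real" where
  "entropy_pmf p = (\<Sum>x\<in>set_pmf p. pmf p x * ln (1 / pmf p x))"

definition diff_pmf :: "'a::ab_group_add pmf \<Rightarrow> 'a pmf \<Rightarrow> 'a pmf" where
  "diff_pmf p q = map_pmf (\<lambda>(x, y). x - y) (pair_pmf p q)"

definition ruzsa_dist :: "'a::ab_group_add pmf \<Rightarrow> 'a pmf \<Rightarrow> real" where
  "ruzsa_dist p q = entropy_pmf (diff_pmf p q) - entropy_pmf p / 2 - entropy_pmf q / 2"

end

theory Submission
  imports Defs
begin

text \<open>Split \<open>X\<close> according to the event \<open>X \<in> S\<close>: \<open>X\<close> is the mixture, with weights
  \<open>p = P(X \<in> S) \<ge> 1/2\<close> and \<open>1 - p\<close>, of \<open>X\<close> conditioned on \<open>S\<close> (call it \<open>X\<^sub>1\<close>) and on its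
  complement (\<open>X\<^sub>0\<close>). Concavity of entropy gives
  \<open>H(X - Y) \<ge> p H(X\<^sub>1 - Y) + (1 - p) H(X\<^sub>0 - Y)\<close>, while mixing over a binary index costs at most
  \<open>ln 2\<close>: \<open>H(X) \<le> ln 2 + p H(X\<^sub>1) + (1 - p) H(X\<^sub>0)\<close>. Each \<open>H(X\<^sub>i - Y)\<close> dominates both \<open>H(X\<^sub>i)\<close>
  and \<open>H(Y)\<close>, so \<open>4 p H(X\<^sub>1 - Y) \<ge> (1 + 2p) H(Y) + (2p - 1) H(X\<^sub>1)\<close>, where \<open>p \<ge> 1/2\<close> makes
  both coefficients nonnegative. Combining these, \<open>H(X\<^sub>1) \<ge> H(Y) - 4 d[X;Y] - 2 ln 2\<close>, and
  \<open>H(X\<^sub>1) \<le> ln |S|\<close> since \<open>X\<^sub>1\<close> lives on \<open>S\<close>.\<close>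

definition entropy_term :: "real \<Rightarrow> real" where
  "entropy_term t = t * ln (1 / t)"

lemma entropy_term_0 [simp]: "entropy_term 0 = 0"
  by (simp add: entropy_term_def)

lemma entropy_term_le_tangent:
  assumes "0 \<le> t" "0 < c"
  shows "entropy_term t \<le> t * ln (1 / c) + c - t"
proof (cases "t = 0")
  case True
  then show ?thesis using assms by simp
next
  case False
  then have t: "0 < t" using assms by simp
  have "ln (c / t) \<le> c / t - 1"
    using t assms by (intro ln_le_minus_one) simp
  then have "t * ln (c / t) \<le> t * (c / t - 1)"
    using t by (simp add: mult_left_mono)
  also have "\<dots> = c - t"
    using t by (simp add: field_simps)
  finally have "t * ln (c / t) \<le> c - t" .
  moreover have "ln (c / t) = ln (1 / t) - ln (1 / c)"
    using t assms by (simp add: ln_div)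
  ultimately show ?thesis
    unfolding entropy_term_def by (simp add: algebra_simps)
qed

lemma entropy_term_mult:
  assumes "0 \<le> a" "0 \<le> t"
  shows "entropy_term (a * t) = a * entropy_term t + t * entropy_term a"
  using assms by (cases "a = 0 \<or> t = 0") (auto simp: entropy_term_def ln_div ln_mult algebra_simps)

lemma entropy_term_sum_le:
  assumes "finite A" "\<And>i. i \<in> A \<Longrightarrow> 0 \<le> a i"
  shows "entropy_term (\<Sum>i\<in>A. a i) \<le> (\<Sum>i\<in>A. entropy_term (a i))"
proof -
  have "a i * ln (1 / (\<Sum>j\<in>A. a j)) \<le> entropy_term (a i)" if i: "i \<in> A" for i
  proof (cases "a i = 0")
    case False
    then have "0 < a i" using assms(2)[OF i] by simp
    moreover have "a i \<le> (\<Sum>j\<in>A. a j)"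
      using assms by (intro member_le_sum i) auto
    ultimately show ?thesis
      unfolding entropy_term_def by (intro mult_left_mono) (simp_all add: ln_div)
  qed simp
  then have "(\<Sum>i\<in>A. a i * ln (1 / (\<Sum>j\<in>A. a j))) \<le> (\<Sum>i\<in>A. entropy_term (a i))"
    by (rule sum_mono)
  then show ?thesis
    unfolding entropy_term_def by (simp add: sum_distrib_right)
qed

lemma entropy_term_concave:
  assumes A: "finite A" and w: "\<And>i. i \<in> A \<Longrightarrow> 0 \<le> w i" and w1: "(\<Sum>i\<in>A. w i) = 1"
    and t: "\<And>i. i \<in> A \<Longrightarrow> 0 \<le> t i"
  shows "(\<Sum>i\<in>A. w i * entropy_term (t i)) \<le> entropy_term (\<Sum>i\<in>A. w i * t i)"
proof (cases "(\<Sum>i\<in>A. w i * t i) = 0")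
  case True
  then have "\<forall>i\<in>A. w i * t i = 0"
    using A w t by (subst sum_nonneg_eq_0_iff[symmetric]) auto
  then have "\<forall>i\<in>A. w i * entropy_term (t i) = 0" by auto
  then have "(\<Sum>i\<in>A. w i * entropy_term (t i)) = 0" by (rule sum.neutral)
  then show ?thesis using True by simp
next
  case False
  define c where "c = (\<Sum>i\<in>A. w i * t i)"
  have c: "0 < c"
    using False w t unfolding c_def by (simp add: order_less_le sum_nonneg)
  have "(\<Sum>i\<in>A. w i * entropy_term (t i)) \<le> (\<Sum>i\<in>A. w i * (t i * ln (1 / c) + c - t i))"
    using w t c by (intro sum_mono mult_left_mono entropy_term_le_tangent) auto
  also have "\<dots> = (\<Sum>i\<in>A. w i * t i) * ln (1 / c) + c * (\<Sum>i\<in>A. w i) - (\<Sum>i\<in>A. w i * t i)"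
    by (simp add: algebra_simps sum.distrib sum_subtractf sum_distrib_left sum_distrib_right)
  also have "\<dots> = entropy_term c"
    using w1 by (simp add: entropy_term_def flip: c_def)
  finally show ?thesis unfolding c_def .
qed

lemma entropy_pmf_eq_sum:
  assumes "finite A" "set_pmf p \<subseteq> A"
  shows "entropy_pmf p = (\<Sum>x\<in>A. entropy_term (pmf p x))"
  unfolding entropy_pmf_def entropy_term_def
  using assms by (intro sum.mono_neutral_left) (auto simp: set_pmf_iff)

lemma entropy_pmf_le_ln_card:
  assumes A: "finite A" and p: "set_pmf p \<subseteq> A"
  shows "entropy_pmf p \<le> ln (card A)"
proof -
  have "A \<noteq> {}" using p set_pmf_not_empty[of p] by blast
  then have n: "0 < real (card A)" using A by (simp add: card_gt_0_iff)
  have "entropy_pmf p \<le> (\<Sum>x\<in>A. pmf p x * ln (card A) + 1 / card A - pmf p x)"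
    unfolding entropy_pmf_eq_sum[OF assms]
    using entropy_term_le_tangent[OF pmf_nonneg, of "1 / card A"] n
    by (intro sum_mono) simp
  also have "\<dots> = ln (card A)"
    using n by (simp add: sum.distrib sum_subtractf sum_pmf_eq_1[OF assms] flip: sum_distrib_right)
  finally show ?thesis .
qed

lemma entropy_pmf_map_inj:
  assumes "inj_on f (set_pmf p)"
  shows "entropy_pmf (map_pmf f p) = entropy_pmf p"
  unfolding entropy_pmf_def using assms
  by (simp add: sum.reindex pmf_map_inj)

lemma pmf_bind_eq_sum:
  assumes "finite (set_pmf p)"
  shows "pmf (bind_pmf p f) z = (\<Sum>x\<in>set_pmf p. pmf p x * pmf (f x) z)"
  unfolding pmf_bind using assms by (subst integral_measure_pmf_real) (auto simp: mult.commute)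

lemma expectation_pmf_eq_sum:
  assumes "finite (set_pmf p)"
  shows "measure_pmf.expectation p g = (\<Sum>x\<in>set_pmf p. pmf p x * g x)"
  using assms by (subst integral_measure_pmf_real) (auto simp: mult.commute)

lemma entropy_bind_pmf_ge:
  assumes p: "finite (set_pmf p)" and f: "\<And>x. x \<in> set_pmf p \<Longrightarrow> finite (set_pmf (f x))"
  shows "measure_pmf.expectation p (\<lambda>x. entropy_pmf (f x)) \<le> entropy_pmf (bind_pmf p f)"
proof -
  define B where "B = set_pmf (bind_pmf p f)"
  have B: "finite B" "\<And>x. x \<in> set_pmf p \<Longrightarrow> set_pmf (f x) \<subseteq> B"
    unfolding B_def using p f by auto
  have "measure_pmf.expectation p (\<lambda>x. entropy_pmf (f x))
      = (\<Sum>x\<in>set_pmf p. pmf p x * (\<Sum>z\<in>B. entropy_term (pmf (f x) z)))"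
    unfolding expectation_pmf_eq_sum[OF p] using B by (simp add: entropy_pmf_eq_sum)
  also have "\<dots> = (\<Sum>z\<in>B. \<Sum>x\<in>set_pmf p. pmf p x * entropy_term (pmf (f x) z))"
    by (simp add: sum_distrib_left sum.swap[of _ B])
  also have "\<dots> \<le> (\<Sum>z\<in>B. entropy_term (\<Sum>x\<in>set_pmf p. pmf p x * pmf (f x) z))"
    using p by (intro sum_mono entropy_term_concave) (auto simp: sum_pmf_eq_1)
  also have "\<dots> = entropy_pmf (bind_pmf p f)"
    unfolding B_def entropy_pmf_def entropy_term_def pmf_bind_eq_sum[OF p] ..
  finally show ?thesis .
qed

lemma entropy_bind_pmf_le:
  assumes p: "finite (set_pmf p)" and f: "\<And>x. x \<in> set_pmf p \<Longrightarrow> finite (set_pmf (f x))"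
  shows "entropy_pmf (bind_pmf p f) \<le> entropy_pmf p + measure_pmf.expectation p (\<lambda>x. entropy_pmf (f x))"
proof -
  define B where "B = set_pmf (bind_pmf p f)"
  have B: "finite B" "\<And>x. x \<in> set_pmf p \<Longrightarrow> set_pmf (f x) \<subseteq> B"
    unfolding B_def using p f by auto
  have "entropy_pmf (bind_pmf p f) = (\<Sum>z\<in>B. entropy_term (\<Sum>x\<in>set_pmf p. pmf p x * pmf (f x) z))"
    unfolding B_def entropy_pmf_def entropy_term_def pmf_bind_eq_sum[OF p] ..
  also have "\<dots> \<le> (\<Sum>z\<in>B. \<Sum>x\<in>set_pmf p. entropy_term (pmf p x * pmf (f x) z))"
    using p by (intro sum_mono entropy_term_sum_le) auto
  also have "\<dots> = (\<Sum>x\<in>set_pmf p. pmf p x * (\<Sum>z\<in>B. entropy_term (pmf (f x) z))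
                                    + entropy_term (pmf p x) * (\<Sum>z\<in>B. pmf (f x) z))"
    by (simp add: entropy_term_mult sum.distrib sum_distrib_left sum_distrib_right sum.swap[of _ B]
        algebra_simps)
  also have "\<dots> = (\<Sum>x\<in>set_pmf p. pmf p x * entropy_pmf (f x) + entropy_term (pmf p x))"
    using B by (intro sum.cong) (simp_all add: entropy_pmf_eq_sum sum_pmf_eq_1)
  also have "\<dots> = entropy_pmf p + measure_pmf.expectation p (\<lambda>x. entropy_pmf (f x))"
    by (simp add: sum.distrib expectation_pmf_eq_sum[OF p] entropy_pmf_def entropy_term_def)
  finally show ?thesis .
qed

lemma diff_pmf_eq_bind_left: "diff_pmf X Y = bind_pmf X (\<lambda>x. map_pmf (\<lambda>y. x - y) Y)"
  unfolding diff_pmf_def pair_pmf_def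
  by (simp add: map_bind_pmf map_return_pmf map_pmf_def[symmetric] pmf.map_comp o_def)

lemma diff_pmf_eq_bind_right: "diff_pmf X Y = bind_pmf Y (\<lambda>y. map_pmf (\<lambda>x. x - y) X)"
  unfolding diff_pmf_def pair_pmf_def bind_commute_pmf[of X]
  by (simp add: map_bind_pmf map_return_pmf map_pmf_def[symmetric] pmf.map_comp o_def)

lemma diff_pmf_bind_left: "diff_pmf (bind_pmf I F) Y = bind_pmf I (\<lambda>i. diff_pmf (F i) Y)"
  unfolding diff_pmf_eq_bind_left by (rule bind_assoc_pmf)

lemma entropy_le_entropy_diff_pmf_right:
  assumes "finite (set_pmf X)" "finite (set_pmf Y)"
  shows "entropy_pmf Y \<le> entropy_pmf (diff_pmf X Y)"
proof -
  have "entropy_pmf (map_pmf (\<lambda>y. x - y) Y) = entropy_pmf Y" for x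
    by (rule entropy_pmf_map_inj) (simp add: inj_on_def)
  moreover have "measure_pmf.expectation X (\<lambda>x. entropy_pmf (map_pmf (\<lambda>y. x - y) Y))
      \<le> entropy_pmf (diff_pmf X Y)"
    unfolding diff_pmf_eq_bind_left using assms by (intro entropy_bind_pmf_ge) auto
  ultimately show ?thesis by simp
qed

lemma entropy_le_entropy_diff_pmf_left:
  assumes "finite (set_pmf X)" "finite (set_pmf Y)"
  shows "entropy_pmf X \<le> entropy_pmf (diff_pmf X Y)"
proof -
  have "entropy_pmf (map_pmf (\<lambda>x. x - y) X) = entropy_pmf X" for y
    by (rule entropy_pmf_map_inj) (simp add: inj_on_def)
  moreover have "measure_pmf.expectation Y (\<lambda>y. entropy_pmf (map_pmf (\<lambda>x. x - y) X))
      \<le> entropy_pmf (diff_pmf X Y)"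
    unfolding diff_pmf_eq_bind_right using assms by (intro entropy_bind_pmf_ge) auto
  ultimately show ?thesis by simp
qed

lemma finite_set_diff_pmf:
  "finite (set_pmf X) \<Longrightarrow> finite (set_pmf Y) \<Longrightarrow> finite (set_pmf (diff_pmf X Y))"
  by (simp add: diff_pmf_def)

lemma expectation_bool_pmf:
  "measure_pmf.expectation I g = pmf I True * g True + pmf I False * g False"
  by (subst integral_measure_pmf_real[of UNIV]) (auto simp: UNIV_bool)

lemma bind_cond_pmf_indicator:
  "bind_pmf (map_pmf (\<lambda>x. x \<in> S) X) (\<lambda>b. cond_pmf X {x. (x \<in> S) = b}) = X"
  by (rule bind_cond_pmf_cancel) (auto simp: measure_map_pmf vimage_def)

lemma entropy_le_bool_mixture_component:
  fixes I :: "bool pmf" and C :: "bool \<Rightarrow> 'a::ab_group_add pmf"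
  assumes C: "\<And>b. b \<in> set_pmf I \<Longrightarrow> finite (set_pmf (C b))" and Y: "finite (set_pmf Y)"
    and half: "1 / 2 \<le> pmf I True"
  shows "entropy_pmf Y - 4 * ruzsa_dist (bind_pmf I C) Y - 2 * ln 2 \<le> entropy_pmf (C True)"
proof -
  define p q where "p = pmf I True" and "q = pmf I False"
  define D where "D b = entropy_pmf (diff_pmf (C b) Y)" for b
  have pq: "p + q = 1"
  proof -
    have "(\<Sum>b\<in>UNIV. pmf I b) = 1" by (rule sum_pmf_eq_1) auto
    then show ?thesis by (simp add: p_def q_def UNIV_bool)
  qed
  have True_I: "True \<in> set_pmf I"
    using half by (simp add: set_pmf_iff)
  have D_True: "entropy_pmf Y \<le> D True" "entropy_pmf (C True) \<le> D True"
    unfolding D_def using C[OF True_I] Y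
    by (simp_all add: entropy_le_entropy_diff_pmf_left entropy_le_entropy_diff_pmf_right)
  \<comment> \<open>Only weighted by \<open>q\<close>: if \<open>q = 0\<close>, nothing is known about \<open>C False\<close>.\<close>
  have D_False: "q * entropy_pmf Y \<le> q * D False" "q * entropy_pmf (C False) \<le> q * D False"
    unfolding D_def q_def using C[of False] Y
    by (cases "False \<in> set_pmf I"; simp add: set_pmf_iff mult_left_mono
        entropy_le_entropy_diff_pmf_left entropy_le_entropy_diff_pmf_right)+
  have "measure_pmf.expectation I D \<le> entropy_pmf (diff_pmf (bind_pmf I C) Y)"
    unfolding diff_pmf_bind_left D_def
    using C Y by (intro entropy_bind_pmf_ge finite_set_diff_pmf) auto
  then have H_diff: "p * D True + q * D False \<le> entropy_pmf (diff_pmf (bind_pmf I C) Y)"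
    by (simp add: expectation_bool_pmf p_def q_def)
  have "entropy_pmf (bind_pmf I C) \<le> entropy_pmf I + measure_pmf.expectation I (\<lambda>b. entropy_pmf (C b))"
    using C by (intro entropy_bind_pmf_le) auto
  moreover have "entropy_pmf I \<le> ln 2"
    using entropy_pmf_le_ln_card[of UNIV I] by simp
  ultimately have H_mix:
    "entropy_pmf (bind_pmf I C) \<le> ln 2 + p * entropy_pmf (C True) + q * entropy_pmf (C False)"
    by (simp add: expectation_bool_pmf p_def q_def)
  have "0 \<le> 2 * p - 1"
    using half by (simp add: p_def)
  then have "(1 + 2 * p) * entropy_pmf Y + (2 * p - 1) * entropy_pmf (C True) \<le> 4 * p * D True"
    using mult_left_mono[OF D_True(1), of "1 + 2 * p"] mult_left_mono[OF D_True(2), of "2 * p - 1"]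
    by (simp add: algebra_simps)
  moreover have "p * entropy_pmf Y + q * entropy_pmf Y = entropy_pmf Y"
    using pq by (metis distrib_right mult_1)
  ultimately show ?thesis
    using H_diff H_mix D_False unfolding ruzsa_dist_def by argo
qed

theorem propositionA8:
  fixes X Y :: "'a::ab_group_add pmf" and S :: "'a set"
  assumes "finite (set_pmf X)" and "finite (set_pmf Y)"
    and "finite S"
    and "measure_pmf.prob X S \<ge> 1 / 2"
  shows "ln (real (card S)) \<ge> entropy_pmf Y - 4 * ruzsa_dist X Y - 2 * ln 2"
proof -
  define I where "I = map_pmf (\<lambda>x. x \<in> S) X"
  define C where "C b = cond_pmf X {x. (x \<in> S) = b}" for b
  have X_eq: "bind_pmf I C = X"
    unfolding I_def C_def by (rule bind_cond_pmf_indicator)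
  have set_C: "set_pmf (C b) = set_pmf X \<inter> {x. (x \<in> S) = b}" if "b \<in> set_pmf I" for b
    using that unfolding C_def I_def by (subst set_cond_pmf) auto
  have pmf_I: "pmf I True = measure_pmf.prob X S"
    unfolding I_def by (simp add: pmf_map vimage_def)
  then have "True \<in> set_pmf I"
    using assms(4) by (simp add: set_pmf_iff)
  then have "entropy_pmf (C True) \<le> ln (card S)"
    using set_C assms(3) by (intro entropy_pmf_le_ln_card) auto
  moreover have "entropy_pmf Y - 4 * ruzsa_dist X Y - 2 * ln 2 \<le> entropy_pmf (C True)"
    unfolding X_eq[symmetric] using set_C assms pmf_I
    by (intro entropy_le_bool_mixture_component) auto
  ultimately show ?thesis by simp
qed

end
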